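(* Let $d,a,b$ be positive integers, $r=(d+2b)/d$, $R=(a+d)/d$, with $R\ge3r$, and let $\rho=x_1-r$ with $x_1$ as in the context. If $t\in\mathbb C$ satisfies $\mathrm{Re}(t)>1$, $\mathrm{Im}(t)\ge0$ and $|t-r|>\rho$, then $\Phi(t)<0$.
   Context: For $t\in\mathbb C\setminus\{\pm1,\pm r\}$ let $\Phi(t)=d\log|t+r|-d\log|t-r|+(a+d)(\log|t-1|-\log|t+1|)$. Under $R\ge3r$ there is a unique $x_1\in(r,\infty)$ with $\Phi(x_1)=0$. *)

theory Defs
  imports Complex_Main
begin

definition rpar :: "nat \<Rightarrow> nat \<Rightarrow> real" where
  "rpar d b = (real d + 2 * real b) / real d"

definition Rpar :: "nat \<Rightarrow> nat \<Rightarrow> real" where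
  "Rpar d a = (real a + real d) / real d"

definition Phi :: "nat \<Rightarrow> nat \<Rightarrow> nat \<Rightarrow> complex \<Rightarrow> real" where
  "Phi d a b t =
     real d * ln (cmod (t + complex_of_real (rpar d b)))
   - real d * ln (cmod (t - complex_of_real (rpar d b)))
   + (real a + real d) * (ln (cmod (t - 1)) - ln (cmod (t + 1)))"

end

theory Submission imports Defs begin

(* Proof idea.  Write r = rpar d b, R = Rpar d a (so r > 1, R \<ge> 3r \<ge> r) and
   s = |t - r| > x1 - r.  Put x = Re t, so 1 < x \<le> r + s.

   On the real axis, Phi/d is the function
   radial r R y = ln((y+r)/(y-r)) - R ln((y+1)/(y-1)).  The quotient
   ln((y+r)/(y-r)) / ln((y+1)/(y-1)) is strictly decreasing for y > r, so beyond
   its root x1 the function radial is negative; in particular radial(r+s) < 0.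

   On the circle |t - r| = s all moduli in Phi are functions of
   x = Re t alone: |t+r|^2 = s^2+4rx, |t-1|^2 = Q(x), |t+1|^2 = P(x) with Q, P
   affine.  Hence 2 Phi/d = f(x) for an explicit real function f, whose
   derivative has the sign of a quadratic k(x).  An identity for
   x0 k(x) - x k(x0) shows: if k(x0) \<ge> 0 then k \<ge> 0 on [x0, r+s], so
   f(x0) \<le> f(r+s) = 2 radial(r+s) < 0; if k(x0) < 0 then k < 0 on [1, x0], so
   f(x0) \<le> f(1), and f(1) < 0 by the inequality ln(1 + r u) \<le> r ln(1+u). *)

lemma ln_ge_two_ratio:
  fixes X :: real assumes "1 \<le> X" shows "2*(X-1)/(X+1) \<le> ln X"
proof -
  let ?g = "\<lambda>X. ln X - 2*(X-1)/(X+1)"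
  have "?g 1 \<le> ?g X"
  proof (rule DERIV_nonneg_imp_nondecreasing[OF assms])
    fix z :: real assume z: "1 \<le> z" "z \<le> X"
    have deriv: "(?g has_real_derivative (z-1)^2/(z*(z+1)^2)) (at z)"
      using z by (intro derivative_eq_intros refl,
          auto, simp add: divide_simps power2_eq_square, simp add: algebra_simps)
    moreover have "(z-1)^2/(z*(z+1)^2) \<ge> 0" using z by simp
    ultimately show "\<exists>y. (?g has_real_derivative y) (at z) \<and> y \<ge> 0" by blast
  qed
  then show ?thesis by simp
qed

lemma ln_one_plus_mult_le:
  fixes a r :: real assumes "0 \<le> a" "1 \<le> r" shows "ln (1 + r*a) \<le> r * ln (1+a)"
proof -
  let ?g = "\<lambda>p. p * ln (1+a) - ln (1+p*a)"
  have lower: "a/(1+a) \<le> ln (1+a)"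
  proof -
    have "ln (1/(1+a)) \<le> 1/(1+a) - 1" using assms by (intro ln_le_minus_one) simp
    then show ?thesis using assms by (simp add: ln_div field_simps)
  qed
  have "?g 1 \<le> ?g r"
  proof (rule DERIV_nonneg_imp_nondecreasing[OF assms(2)])
    fix z :: real assume z: "1 \<le> z" "z \<le> r"
    have pos: "0 < 1 + z*a" using z assms by (simp add: add_pos_nonneg)
    have deriv: "(?g has_real_derivative (ln (1+a) - a/(1+z*a))) (at z)"
      using pos by (auto intro!: derivative_eq_intros simp: field_simps)
    have "a/(1+z*a) \<le> a/(1+a)"
      using z assms pos mult_right_mono[of 1 z a] by (intro divide_left_mono) auto
    then show "\<exists>y. (?g has_real_derivative y) (at z) \<and> y \<ge> 0"
      using deriv lower by (intro exI[of _ "ln (1+a) - a/(1+z*a)"]) auto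
  qed
  then show ?thesis by simp
qed

section \<open>The function Phi on the real axis\<close>

definition radial :: "real \<Rightarrow> real \<Rightarrow> real \<Rightarrow> real" where
  "radial r R y = ln (y+r) - ln (y-r) - R * (ln (y+1) - ln (y-1))"

lemma log_ratio_weight_decreasing:
  fixes y c1 c2 :: real assumes "0 < c1" "c1 < c2" "c2 < y"
  shows "(y^2-c2^2)/c2 * (ln(y+c2) - ln(y-c2)) < (y^2-c1^2)/c1 * (ln(y+c1) - ln(y-c1))"
proof -
  let ?g = "\<lambda>c. (y^2-c^2)/c * (ln(y+c) - ln(y-c))"
  have "?g c1 > ?g c2"
  proof (rule DERIV_neg_imp_decreasing[OF assms(2)])
    fix z :: real assume z: "c1 \<le> z" "z \<le> c2"
    have z0: "0 < z" "z < y" using z assms by auto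
    define L where "L = ln(y+z) - ln(y-z)"
    have deriv: "(?g has_real_derivative (2*y/z - (y^2+z^2)/z^2 * L)) (at z)"
      using z0 unfolding L_def
      by (intro derivative_eq_intros refl,
          auto, simp add: divide_simps power2_eq_square, simp add: algebra_simps)
    have "ln ((y+z)/(y-z)) = L" using z0 unfolding L_def by (simp add: ln_div)
    moreover have "2*((y+z)/(y-z)-1)/((y+z)/(y-z)+1) = 2*z/y" using z0 by (simp add: field_simps)
    moreover have "1 \<le> (y+z)/(y-z)" using z0 by (simp add: field_simps)
    ultimately have "2*z/y \<le> L" using ln_ge_two_ratio by metis
    then have "(y^2+z^2)/z^2 * (2*z/y) \<le> (y^2+z^2)/z^2 * L" using z0 by (intro mult_left_mono) auto
    moreover have "(y^2+z^2)/z^2 * (2*z/y) = 2*y/z + 2*z/y" using z0 by (simp add: field_simps power2_eq_square)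
    moreover have "2*z/y > 0" using z0 by simp
    ultimately have "2*y/z - (y^2+z^2)/z^2 * L < 0" by linarith
    then show "\<exists>D. (?g has_real_derivative D) (at z) \<and> D < 0"
      using deriv by blast
  qed
  then show ?thesis by simp
qed

lemma log_ratio_quotient_decreasing:
  fixes r y1 y2 :: real assumes "1 < r" "r < y1" "y1 < y2"
  shows "(ln(y2+r)-ln(y2-r))/(ln(y2+1)-ln(y2-1)) < (ln(y1+r)-ln(y1-r))/(ln(y1+1)-ln(y1-1))"
proof -
  let ?g = "\<lambda>y. (ln(y+r)-ln(y-r))/(ln(y+1)-ln(y-1))"
  have "?g y1 > ?g y2"
  proof (rule DERIV_neg_imp_decreasing[OF assms(3)])
    fix z :: real assume z: "y1 \<le> z" "z \<le> y2"
    have z0: "r < z" "1 < z" using z assms by auto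
    define Lr where "Lr = ln(z+r)-ln(z-r)"
    define L1 where "L1 = ln(z+1)-ln(z-1)"
    have L1_pos: "L1 > 0" unfolding L1_def using z0 by simp
    have deriv: "(?g has_real_derivative
        (((1/(z+r) - 1/(z-r)) * L1 - Lr * (1/(z+1) - 1/(z-1))) / (L1*L1))) (at z)"
      using z0 assms L1_pos unfolding L1_def Lr_def
      by (intro derivative_eq_intros refl, simp_all, simp_all)
    have sq_pos: "z^2 - r^2 > 0" "z^2 - 1 > 0" using z0 assms by (simp_all add: power_strict_mono)
    have "(z^2-r^2)/r * Lr < (z^2-1^2)/1 * L1"
      using log_ratio_weight_decreasing[of 1 r z] z0 assms unfolding Lr_def L1_def by simp
    then have weighted: "(z^2-r^2) * Lr < r * ((z^2-1) * L1)"
      using assms by (simp add: field_simps)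
    have "(1/(z+r) - 1/(z-r)) * L1 - Lr * (1/(z+1) - 1/(z-1))
        = 2 * ((z^2-r^2) * Lr - r * ((z^2-1) * L1)) / ((z^2-1) * (z^2-r^2))"
      using z0 assms sq_pos by (simp add: field_simps power2_eq_square)
    also have "\<dots> < 0" using weighted sq_pos by (simp add: divide_neg_pos)
    finally have "((1/(z+r) - 1/(z-r)) * L1 - Lr * (1/(z+1) - 1/(z-1))) / (L1*L1) < 0"
      using L1_pos by (simp add: divide_neg_pos)
    then show "\<exists>D. (?g has_real_derivative D) (at z) \<and> D < 0"
      using deriv by blast
  qed
  then show ?thesis by simp
qed

lemma radial_neg_beyond_root:
  fixes r R x1 y :: real
  assumes "1 < r" "r < x1" "x1 < y" and root: "radial r R x1 = 0"
  shows "radial r R y < 0"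
proof -
  have pos1: "ln(x1+1)-ln(x1-1) > 0" and pos2: "ln(y+1)-ln(y-1) > 0" using assms by simp_all
  have "(ln(y+r)-ln(y-r))/(ln(y+1)-ln(y-1)) < (ln(x1+r)-ln(x1-r))/(ln(x1+1)-ln(x1-1))"
    using log_ratio_quotient_decreasing assms by blast
  also have "\<dots> = R" using root pos1 unfolding radial_def by (simp add: field_simps)
  finally show ?thesis using pos2 unfolding radial_def by (simp add: divide_simps)
qed

section \<open>The function Phi on a circle around r\<close>

(* On the circle |t - r| = s, with x = Re t: |t+r|^2 = circ_S, |t-1|^2 = circ_Q,
   |t+1|^2 = circ_P. *)
definition circ_S :: "real \<Rightarrow> real \<Rightarrow> real \<Rightarrow> real" where
  "circ_S r s x = s^2 + 4*r*x"

definition circ_Q :: "real \<Rightarrow> real \<Rightarrow> real \<Rightarrow> real" where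
  "circ_Q r s x = s^2 + 2*(r-1)*x - (r^2-1)"

definition circ_P :: "real \<Rightarrow> real \<Rightarrow> real \<Rightarrow> real" where
  "circ_P r s x = s^2 + 2*(r+1)*x - (r^2-1)"

(* circ_Q (x) = circ_D + 2(r-1)x; the sign of circ_D governs the shape of circ_k. *)
definition circ_D :: "real \<Rightarrow> real \<Rightarrow> real" where
  "circ_D r s = s^2 - (r^2-1)"

(* Twice Phi/d on the circle, as a function of x = Re t. *)
definition circ_f :: "real \<Rightarrow> real \<Rightarrow> real \<Rightarrow> real \<Rightarrow> real" where
  "circ_f r R s x = ln (circ_S r s x) - ln (s^2) + R * (ln (circ_Q r s x) - ln (circ_P r s x))"

(* A quadratic in x having the sign of the derivative of circ_f. *)
definition circ_k :: "real \<Rightarrow> real \<Rightarrow> real \<Rightarrow> real \<Rightarrow> real" where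
  "circ_k r R s x = r * circ_Q r s x * circ_P r s x - R * circ_D r s * circ_S r s x"

lemma circ_P_eq: "circ_P r s x = circ_Q r s x + 4*x"
  unfolding circ_P_def circ_Q_def by (simp add: algebra_simps)

lemma circ_Q_mono: "1 < r \<Longrightarrow> x \<le> y \<Longrightarrow> circ_Q r s x \<le> circ_Q r s y"
  unfolding circ_Q_def using mult_left_mono[of x y "2*(r-1)"] by simp

lemma circ_denominator_pos:
  assumes "1 < r" "0 < x" "0 < circ_Q r s x"
  shows "0 < circ_S r s x * circ_Q r s x * circ_P r s x"
proof -
  have "0 < circ_S r s x" using assms unfolding circ_S_def by (simp add: add_nonneg_pos)
  moreover have "0 < circ_P r s x" using assms by (simp add: circ_P_eq)
  ultimately show ?thesis using assms by simp
qed

lemma circ_f_deriv: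
  assumes "1 < r" "0 < x" "0 < circ_Q r s x"
  shows "(circ_f r R s has_real_derivative
           4 * circ_k r R s x / (circ_S r s x * circ_Q r s x * circ_P r s x)) (at x)"
proof -
  define S Q P where "S = circ_S r s x" and "Q = circ_Q r s x" and "P = circ_P r s x"
  have S_pos: "0 < S" unfolding S_def using assms unfolding circ_S_def by (simp add: add_nonneg_pos)
  have P_pos: "0 < P" unfolding P_def using assms by (simp add: circ_P_eq)
  have dS: "(circ_S r s has_real_derivative 4*r) (at x)"
    unfolding circ_S_def by (auto intro!: derivative_eq_intros)
  have dQ: "(circ_Q r s has_real_derivative 2*(r-1)) (at x)"
    unfolding circ_Q_def by (auto intro!: derivative_eq_intros)
  have dP: "(circ_P r s has_real_derivative 2*(r+1)) (at x)"
    unfolding circ_P_def by (auto intro!: derivative_eq_intros)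
  have lnS: "((\<lambda>x. ln (circ_S r s x)) has_real_derivative 4*r / S) (at x)"
    using DERIV_chain2[OF DERIV_ln_divide dS] S_pos unfolding S_def by simp
  have lnQ: "((\<lambda>x. ln (circ_Q r s x)) has_real_derivative 2*(r-1) / Q) (at x)"
    using DERIV_chain2[OF DERIV_ln_divide dQ] assms(3) unfolding Q_def by simp
  have lnP: "((\<lambda>x. ln (circ_P r s x)) has_real_derivative 2*(r+1) / P) (at x)"
    using DERIV_chain2[OF DERIV_ln_divide dP] P_pos unfolding P_def by simp
  have deriv: "(circ_f r R s has_real_derivative
      4*r / S - 0 + R * (2*(r-1) / Q - 2*(r+1) / P)) (at x)"
    unfolding circ_f_def[abs_def]
    by (intro DERIV_add DERIV_diff DERIV_cmult lnS lnQ lnP DERIV_const)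
  have D_eq: "2*(r-1)*P - 2*(r+1)*Q = -4 * circ_D r s"
    unfolding P_def Q_def circ_P_def circ_Q_def circ_D_def by (simp add: algebra_simps)
  have k_eq: "4*r*Q*P + R*(2*(r-1)*P - 2*(r+1)*Q)*S = 4 * circ_k r R s x"
    unfolding D_eq unfolding circ_k_def S_def Q_def P_def by (simp add: algebra_simps)
  have "4*r / S - 0 + R * (2*(r-1) / Q - 2*(r+1) / P)
      = (4*r*Q*P + R*(2*(r-1)*P - 2*(r+1)*Q)*S) / (S*Q*P)"
    using S_pos P_pos assms(3) unfolding Q_def by (simp add: field_simps)
  with deriv k_eq show ?thesis unfolding S_def Q_def P_def by simp
qed

lemma circ_k_cross:
  "x0 * circ_k r R s x - x * circ_k r R s x0
     = 4*r*(r-1)*(r+1) * x * x0 * (x - x0) + circ_D r s * (r * circ_D r s - R * s^2) * (x0 - x)"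
  unfolding circ_k_def circ_D_def circ_Q_def circ_P_def circ_S_def
  by (simp add: algebra_simps power2_eq_square)

lemma circ_D_factor_nonpos:
  assumes "1 < r" "r \<le> R" "0 \<le> circ_D r s"
  shows "circ_D r s * (r * circ_D r s - R * s^2) \<le> 0"
proof -
  have "circ_D r s \<le> s^2" using assms(1) unfolding circ_D_def by (simp add: one_le_power)
  then have "r * circ_D r s \<le> r * s^2" using assms(1) by (intro mult_left_mono) auto
  also have "\<dots> \<le> R * s^2" using assms(2) by (intro mult_right_mono) auto
  finally show ?thesis using assms(3) by (simp add: mult_nonneg_nonpos)
qed

lemma circ_D_nonneg_if_k_neg:
  assumes "1 < r" "r \<le> R" "0 < x" "0 < circ_Q r s x" "circ_k r R s x < 0"
  shows "0 \<le> circ_D r s"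
proof (rule ccontr)
  assume "\<not> 0 \<le> circ_D r s"
  then have "R * circ_D r s * circ_S r s x < 0"
    using assms unfolding circ_S_def by (intro mult_neg_pos mult_pos_neg) (auto simp: add_nonneg_pos)
  moreover have "0 < r * circ_Q r s x * circ_P r s x" using assms by (simp add: circ_P_eq)
  ultimately show False using assms(5) unfolding circ_k_def by linarith
qed

lemma circ_k_nonneg_right:
  assumes "1 < r" "r \<le> R" "0 < x0" "x0 \<le> z" "0 < circ_Q r s x0" "0 \<le> circ_k r R s x0"
  shows "0 \<le> circ_k r R s z"
proof (rule ccontr)
  assume neg: "\<not> 0 \<le> circ_k r R s z"
  have "0 < circ_Q r s z" using assms circ_Q_mono[of r x0 z s] by simp
  then have D_nonneg: "0 \<le> circ_D r s"
    using assms neg by (intro circ_D_nonneg_if_k_neg[of r R z s]) linarith+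
  have "circ_D r s * (r * circ_D r s - R * s^2) * (z - x0) \<le> 0"
    using circ_D_factor_nonpos[OF assms(1,2) D_nonneg] assms by (simp add: mult_nonpos_nonneg)
  moreover have "4*r*(r-1)*(r+1) * x0 * z * (x0 - z) \<le> 0"
    using assms by (simp add: mult_nonneg_nonpos)
  ultimately have "z * circ_k r R s x0 \<le> x0 * circ_k r R s z"
    using circ_k_cross[of z r R s x0] by linarith
  moreover have "0 \<le> z * circ_k r R s x0" using assms by simp
  moreover have "x0 * circ_k r R s z < 0" using assms neg by (simp add: mult_pos_neg)
  ultimately show False by linarith
qed

lemma circ_k_neg_left:
  assumes "1 < r" "r \<le> R" "0 < z" "z \<le> x0" "0 < circ_Q r s x0" "circ_k r R s x0 < 0"
  shows "circ_k r R s z < 0"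
proof -
  have D_nonneg: "0 \<le> circ_D r s"
    using assms by (intro circ_D_nonneg_if_k_neg[of r R x0 s]) linarith+
  have "circ_D r s * (r * circ_D r s - R * s^2) * (x0 - z) \<le> 0"
    using circ_D_factor_nonpos[OF assms(1,2) D_nonneg] assms by (simp add: mult_nonpos_nonneg)
  moreover have "4*r*(r-1)*(r+1) * z * x0 * (z - x0) \<le> 0"
    using assms by (simp add: mult_nonneg_nonpos)
  ultimately have "x0 * circ_k r R s z \<le> z * circ_k r R s x0"
    using circ_k_cross[of x0 r R s z] by linarith
  moreover have "z * circ_k r R s x0 < 0" using assms by (simp add: mult_pos_neg)
  ultimately have "x0 * circ_k r R s z < 0" by linarith
  then show ?thesis using assms by (simp add: mult_less_0_iff)
qed

lemma circ_f_nondecreasing_right: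
  assumes "1 < r" "r \<le> R" "0 < x0" "x0 \<le> x" "0 < circ_Q r s x0" "0 \<le> circ_k r R s x0"
  shows "circ_f r R s x0 \<le> circ_f r R s x"
proof (rule DERIV_nonneg_imp_nondecreasing[OF assms(4)])
  fix z assume z: "x0 \<le> z" "z \<le> x"
  have Q_pos: "0 < circ_Q r s z" using assms z circ_Q_mono[of r x0 z s] by simp
  have z_pos: "0 < z" using assms z by linarith
  have "0 \<le> circ_k r R s z" using circ_k_nonneg_right[OF assms(1-3) z(1) assms(5,6)] .
  moreover have "0 < circ_S r s z * circ_Q r s z * circ_P r s z"
    using circ_denominator_pos[OF assms(1) z_pos Q_pos] .
  ultimately have "0 \<le> 4 * circ_k r R s z / (circ_S r s z * circ_Q r s z * circ_P r s z)"
    by simp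
  then show "\<exists>y. (circ_f r R s has_real_derivative y) (at z) \<and> 0 \<le> y"
    using circ_f_deriv[OF assms(1) z_pos Q_pos] by blast
qed

lemma circ_f_nonincreasing_left:
  assumes "1 < r" "r \<le> R" "0 < x" "x \<le> x0" "0 < circ_Q r s x" "circ_k r R s x0 < 0"
  shows "circ_f r R s x0 \<le> circ_f r R s x"
proof (rule DERIV_nonpos_imp_nonincreasing[OF assms(4)])
  fix z assume z: "x \<le> z" "z \<le> x0"
  have Q_pos: "0 < circ_Q r s z" and Q_x0: "0 < circ_Q r s x0"
    using assms z circ_Q_mono[of r x z s] circ_Q_mono[of r x x0 s] by simp_all
  have z_pos: "0 < z" using assms z by linarith
  have "circ_k r R s z < 0" using circ_k_neg_left[OF assms(1,2) z_pos z(2) Q_x0 assms(6)] .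
  moreover have "0 < circ_S r s z * circ_Q r s z * circ_P r s z"
    using circ_denominator_pos[OF assms(1) z_pos Q_pos] .
  ultimately have "4 * circ_k r R s z / (circ_S r s z * circ_Q r s z * circ_P r s z) \<le> 0"
    by (simp add: divide_nonpos_pos)
  then show "\<exists>y. (circ_f r R s has_real_derivative y) (at z) \<and> y \<le> 0"
    using circ_f_deriv[OF assms(1) z_pos Q_pos] by blast
qed

lemma circ_f_at_real_point:
  assumes "1 < r" "0 < s"
  shows "circ_f r R s (r+s) = 2 * radial r R (r+s)"
proof -
  have "circ_S r s (r+s) = (r+s+r)^2" "circ_Q r s (r+s) = (r+s-1)^2" "circ_P r s (r+s) = (r+s+1)^2"
    unfolding circ_S_def circ_Q_def circ_P_def by (simp_all add: algebra_simps power2_eq_square)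
  then show ?thesis unfolding circ_f_def radial_def by (simp add: ln_realpow algebra_simps)
qed

lemma circ_f_at_one_neg:
  assumes r1: "1 < r" and rR: "r \<le> R" and s: "0 < s" and Q1: "0 < circ_Q r s 1"
  shows "circ_f r R s 1 < 0"
proof -
  define u where "u = 4/s^2"
  define v where "v = 4 / circ_Q r s 1"
  have u_pos: "0 < u" using s unfolding u_def by simp
  have S_ln: "ln (circ_S r s 1) - ln (s^2) = ln (1 + r*u)"
  proof -
    have "1 + r*u = circ_S r s 1 / s^2" using s unfolding u_def circ_S_def by (simp add: field_simps)
    moreover have "0 < circ_S r s 1" using s r1 unfolding circ_S_def by (simp add: add_pos_pos)
    ultimately show ?thesis using s by (simp add: ln_div)
  qed
  have PQ_ln: "ln (circ_Q r s 1) - ln (circ_P r s 1) = - ln (1 + v)"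
  proof -
    have "1 + v = circ_P r s 1 / circ_Q r s 1" using Q1 unfolding v_def by (simp add: circ_P_eq field_simps)
    moreover have "0 < circ_P r s 1" using Q1 by (simp add: circ_P_eq)
    ultimately show ?thesis using Q1 by (simp add: ln_div)
  qed
  have "0 < (r-1)^2" using r1 by simp
  then have "circ_Q r s 1 < s^2" unfolding circ_Q_def by (simp add: power2_eq_square algebra_simps)
  then have "u < v" using Q1 s unfolding u_def v_def by (intro divide_strict_left_mono) auto
  then have "ln (1 + u) < ln (1 + v)" using u_pos by simp
  moreover have "0 < ln (1 + u)" using u_pos by simp
  ultimately have "r * ln (1 + u) < R * ln (1 + v)" using rR r1 by (intro mult_le_less_imp_less) auto
  moreover have "ln (1 + r*u) \<le> r * ln (1 + u)" using u_pos r1 by (intro ln_one_plus_mult_le) linarith+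
  moreover have "R * (ln (circ_Q r s 1) - ln (circ_P r s 1)) = - (R * ln (1 + v))"
    using PQ_ln by simp
  ultimately show ?thesis unfolding circ_f_def using S_ln by linarith
qed

lemma circ_f_neg:
  assumes r1: "1 < r" and rR: "r \<le> R" and s: "0 < s"
    and x: "1 < x" "x \<le> r + s" and Qx: "0 < circ_Q r s x"
    and radial_neg: "radial r R (r+s) < 0"
  shows "circ_f r R s x < 0"
proof (cases "0 \<le> circ_k r R s x")
  case True
  then have "circ_f r R s x \<le> circ_f r R s (r+s)"
    using circ_f_nondecreasing_right[OF r1 rR _ x(2) Qx True] x(1) by simp
  also have "\<dots> < 0" using circ_f_at_real_point[OF r1 s] radial_neg by simp
  finally show ?thesis .
next
  case False
  then have "0 \<le> circ_D r s" using assms by (intro circ_D_nonneg_if_k_neg[of r R x s]) linarith+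
  then have Q1: "0 < circ_Q r s 1" using r1 unfolding circ_D_def circ_Q_def by simp
  have "circ_f r R s x \<le> circ_f r R s 1"
    using circ_f_nonincreasing_left[OF r1 rR zero_less_one _ Q1] x(1) False by simp
  also have "\<dots> < 0" using circ_f_at_one_neg[OF r1 rR s Q1] .
  finally show ?thesis .
qed

lemma rpar_gt_one: "0 < d \<Longrightarrow> 0 < b \<Longrightarrow> 1 < rpar d b"
  unfolding rpar_def by (simp add: field_simps)

lemma Rpar_mult: "0 < d \<Longrightarrow> real a + real d = Rpar d a * real d"
  unfolding Rpar_def by simp

lemma Phi_real_axis:
  assumes "0 < d" "1 < rpar d b" "rpar d b < y"
  shows "Phi d a b (complex_of_real y) = real d * radial (rpar d b) (Rpar d a) y"
proof -
  define r where "r = rpar d b"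
  have real_shift: "complex_of_real y - 1 = complex_of_real (y - 1)"
    "complex_of_real y + 1 = complex_of_real (y + 1)" by simp_all
  have norms: "cmod (complex_of_real y + complex_of_real r) = y + r"
    "cmod (complex_of_real y - complex_of_real r) = y - r"
    "cmod (complex_of_real y - 1) = y - 1" "cmod (complex_of_real y + 1) = y + 1"
    using assms
    unfolding r_def real_shift of_real_add[symmetric] of_real_diff[symmetric] norm_of_real
    by simp_all
  show ?thesis
    unfolding Phi_def r_def[symmetric] norms Rpar_mult[OF assms(1)] radial_def
    by (simp add: algebra_simps)
qed

lemma circ_norms:
  fixes t :: complex and r :: real
  defines "s \<equiv> cmod (t - complex_of_real r)"
  shows "(cmod (t + complex_of_real r))^2 = circ_S r s (Re t)"
    and "(cmod (t - 1))^2 = circ_Q r s (Re t)"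
    and "(cmod (t + 1))^2 = circ_P r s (Re t)"
  unfolding s_def circ_S_def circ_Q_def circ_P_def cmod_power2
  by (simp_all add: power2_eq_square algebra_simps)

lemma Phi_on_circle:
  assumes "0 < d" "1 < rpar d b" "1 < Re t"
  shows "Phi d a b t
    = real d / 2 * circ_f (rpar d b) (Rpar d a) (cmod (t - complex_of_real (rpar d b))) (Re t)"
proof -
  define r where "r = rpar d b"
  define s where "s = cmod (t - complex_of_real r)"
  have "0 < cmod (t + complex_of_real r)" "0 < cmod (t - 1)" "0 < cmod (t + 1)"
    using assms unfolding r_def by (auto simp: complex_eq_iff)
  then have "ln (circ_S r s (Re t)) = 2 * ln (cmod (t + complex_of_real r))"
    "ln (circ_Q r s (Re t)) = 2 * ln (cmod (t - 1))"
    "ln (circ_P r s (Re t)) = 2 * ln (cmod (t + 1))"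
    unfolding s_def circ_norms[symmetric] by (simp_all add: ln_realpow)
  then show ?thesis
    unfolding Phi_def circ_f_def r_def[symmetric] s_def[symmetric] Rpar_mult[OF assms(1)]
    by (simp add: ln_realpow algebra_simps)
qed

theorem lemma4p12:
  fixes d a b :: nat and x1 :: real and t :: complex
  assumes "d > 0" "a > 0" "b > 0"
    and "Rpar d a \<ge> 3 * rpar d b"
    and "x1 > rpar d b" and "Phi d a b (complex_of_real x1) = 0"
    and "Re t > 1" and "Im t \<ge> 0"
    and "cmod (t - complex_of_real (rpar d b)) > x1 - rpar d b"
  shows "Phi d a b t < 0"
proof -
  define r R s where "r = rpar d b" and "R = Rpar d a" and "s = cmod (t - complex_of_real r)"
  have r1: "1 < r" unfolding r_def using assms by (simp add: rpar_gt_one)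
  have rR: "r \<le> R" using assms(4) r1 unfolding r_def R_def by linarith
  have "radial r R x1 = 0" using Phi_real_axis[of d b x1 a] assms r1 unfolding r_def R_def by simp
  then have radial_neg: "radial r R (r+s) < 0"
    using radial_neg_beyond_root[OF r1] assms unfolding r_def s_def by simp
  have s_pos: "0 < s" using assms(5,9) unfolding r_def s_def by linarith
  have x_le: "Re t \<le> r + s" using abs_Re_le_cmod[of "t - complex_of_real r"] unfolding s_def by simp
  have "t \<noteq> 1" using assms(7) by auto
  then have "0 < (cmod (t - 1))^2" by simp
  then have Q_pos: "0 < circ_Q r s (Re t)" using circ_norms(2)[of t r] unfolding s_def by linarith
  have circ_neg: "circ_f r R s (Re t) < 0"
    using circ_f_neg[OF r1 rR s_pos assms(7) x_le Q_pos radial_neg] .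
  have "Phi d a b t = real d / 2 * circ_f r R s (Re t)"
    using Phi_on_circle[of d b t a] assms r1 unfolding r_def R_def s_def by simp
  also have "\<dots> < 0" using circ_neg assms(1) by (simp add: mult_pos_neg)
  finally show ?thesis .
qed

end
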